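(* Let $X=(X(t),t\in\mathbb{R})$ be a real-valued centered stationary Gaussian process with continuous sample paths, whose covariance function $R_X(t)=\mathrm{Cov}(X(0),X(t))$ is positive and satisfies $\int_0^\infty R_X(t)\,dt<\infty$. Then, with $\lambda$ the uniform (Lebesgue) probability measure on $[0,1]$, $$\lim_{a\to\infty}\frac1aC_X(a)=\Big(\lim_{a\to\infty}a\int_0^1\!\!\int_0^1R_X(a(u-v))\,\lambda(du)\lambda(dv)\Big)^{-1}=\frac{1}{2\int_0^\infty R_X(t)\,dt}.$$
   Context: For $a>0$, $C_X(a)$ is defined by $\lim_{u\to\infty}u^{-2}\log P(X(t)>u,\ 0\le t\le a)=-\frac12C_X(a)$; equivalently $C_X(a)=\big[\min_{\mu}\int_0^1\int_0^1R_X(a(u-v))\mu(du)\mu(dv)\big]^{-1}$, the minimum over Borel probability measures $\mu$ on $[0,1]$. *)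

theory Defs
  imports "HOL-Probability.Probability"
begin

definition lincomb :: "(real \<Rightarrow> 'a \<Rightarrow> real) \<Rightarrow> real list \<Rightarrow> real list \<Rightarrow> 'a \<Rightarrow> real" where
  "lincomb X ts cs = (\<lambda>\<omega>. \<Sum>i<length ts. cs ! i * X (ts ! i) \<omega>)"

definition cov :: "'a measure \<Rightarrow> ('a \<Rightarrow> real) \<Rightarrow> ('a \<Rightarrow> real) \<Rightarrow> real" where
  "cov M U V = (LINT \<omega>|M. (U \<omega> - (LINT x|M. U x)) * (V \<omega> - (LINT x|M. V x)))"

text \<open>Real-valued centered Gaussian process indexed by the reals: every finite linear
  combination of its values is a centered (possibly degenerate) normal random variable,
  expressed through its characteristic function.\<close>
definition centered_gaussian_process :: "'a measure \<Rightarrow> (real \<Rightarrow> 'a \<Rightarrow> real) \<Rightarrow> bool" where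
  "centered_gaussian_process M X \<longleftrightarrow>
     prob_space M \<and> (\<forall>t. X t \<in> borel_measurable M) \<and>
     (\<forall>ts cs. length cs = length ts \<longrightarrow>
        integrable M (\<lambda>\<omega>. (lincomb X ts cs \<omega>)\<^sup>2) \<and>
        (\<forall>\<theta>. char (distr M borel (lincomb X ts cs)) \<theta> =
              complex_of_real (exp (- (\<theta>\<^sup>2 * (LINT \<omega>|M. (lincomb X ts cs \<omega>)\<^sup>2)) / 2))))"

text \<open>Strict stationarity: all finite-dimensional distributions are shift invariant
  (stated via all finite linear combinations, which determine them by Cramer--Wold).\<close>
definition stationary_process :: "'a measure \<Rightarrow> (real \<Rightarrow> 'a \<Rightarrow> real) \<Rightarrow> bool" where
  "stationary_process M X \<longleftrightarrow>
     (\<forall>ts cs h. length cs = length ts \<longrightarrow>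
        distr M borel (lincomb X (map (\<lambda>t. t + h) ts) cs) = distr M borel (lincomb X ts cs))"

definition prob_measures_01 :: "real measure set" where
  "prob_measures_01 = {\<mu>. prob_space \<mu> \<and> sets \<mu> = sets (restrict_space borel {0..1::real})}"

definition energy :: "(real \<Rightarrow> real) \<Rightarrow> real \<Rightarrow> real measure \<Rightarrow> real" where
  "energy R a \<mu> = (LINT u|\<mu>. (LINT v|\<mu>. R (a * (u - v))))"

definition C_X :: "(real \<Rightarrow> real) \<Rightarrow> real \<Rightarrow> real" where
  "C_X R a = inverse (Inf (energy R a ` prob_measures_01))"

end

theory Submission
  imports Defs
begin

text \<open>The covariance \<open>R\<close> of a stationary Gaussian process with continuous paths is continuous,
  even and a positive definite function. Write \<open>P\<close> for its primitive and \<open>I = \<integral>\<^sub>0\<^sup>\<infinity> R\<close>.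
  Then \<open>a \<integral>\<^sub>0\<^sup>1\<integral>\<^sub>0\<^sup>1 R(a(u-v)) dv du = \<integral>\<^sub>0\<^sup>1 P(au) + P(a(1-u)) du \<rightarrow> 2I\<close>, and the uniform measure
  bounds \<open>a\<close> times the minimal energy from above. For the lower bound, positive definiteness
  makes \<open>(\<mu>,\<nu>) \<mapsto> \<integral>\<integral> R(a(u-v)) \<mu>(du) \<nu>(dv)\<close> a positive semidefinite bilinear form on finite
  measures, and Cauchy--Schwarz against Lebesgue measure \<open>\<nu>\<close> on \<open>[-\<delta>, 1+\<delta>]\<close> gives, for every
  probability measure \<open>\<mu>\<close> on \<open>[0,1]\<close>, energy at least \<open>2P(a\<delta>)\<^sup>2 / ((1+2\<delta>) I a)\<close>: the cross
  term is at least \<open>2P(a\<delta>)/a\<close> and the energy of \<open>\<nu>\<close> at most \<open>2(1+2\<delta>)I/a\<close>. With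
  \<open>\<delta> = a\<^sup>-\<^sup>1\<^sup>/\<^sup>2\<close> this lower bound also tends to \<open>2I\<close>.\<close>

section \<open>Positive definite functions\<close>

definition positive_definite_function :: "(real \<Rightarrow> real) \<Rightarrow> bool" where
  "positive_definite_function R \<longleftrightarrow>
     (\<forall>(K::int set) c x. finite K \<longrightarrow> 0 \<le> (\<Sum>k\<in>K. \<Sum>l\<in>K. c k * c l * R (x k - x l)))"

lemma positive_definite_functionD:
  fixes K :: "int set"
  assumes "positive_definite_function R" and "finite K"
  shows "0 \<le> (\<Sum>k\<in>K. \<Sum>l\<in>K. c k * c l * R (x k - x l))"
  by (rule assms(1)[unfolded positive_definite_function_def, rule_format, OF assms(2)])

lemma discriminant_le_if_quadratic_nonneg:
  fixes A B C :: real
  assumes q: "\<And>l. 0 \<le> A + 2*l*B + l^2*C" and C: "0 \<le> C"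
  shows "B^2 \<le> A*C"
proof (cases "C = 0")
  case True
  have "B = 0"
  proof (rule ccontr)
    assume B: "B \<noteq> 0"
    have "0 \<le> A + 2*(-(\<bar>A\<bar>+1)/(2*B))*B" using q[of "-(\<bar>A\<bar>+1)/(2*B)"] True by simp
    also have "\<dots> = A - (\<bar>A\<bar>+1)" using B by (simp add: field_simps)
    finally show False by linarith
  qed
  then show ?thesis using True by simp
next
  case False
  then have Cp: "0 < C" using C by simp
  have "0 \<le> A + 2*(-B/C)*B + (-B/C)^2*C" by (rule q)
  also have "\<dots> = A - B^2/C" using Cp by (simp add: power2_eq_square field_simps)
  finally have "B^2/C \<le> A" by simp
  then show ?thesis using Cp by (simp add: pos_divide_le_eq mult.commute)
qed

lemma positive_definite_function_le_0:
  assumes pd: "positive_definite_function R" and even: "\<And>t. R (-t) = R t"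
  shows "R t \<le> R 0"
proof -
  let ?c = "\<lambda>k::int. if k = 0 then 1 else -1 :: real"
  let ?x = "\<lambda>k::int. if k = 0 then 0 else t"
  have "0 \<le> (\<Sum>k\<in>{0,1}. \<Sum>l\<in>{0,1}. ?c k * ?c l * R (?x k - ?x l))"
    by (rule positive_definite_functionD[OF pd]) simp
  then show ?thesis by (simp add: even)
qed

text \<open>The three-point quadratic form at \<open>0, t+h, t\<close> gives
  \<open>(R(t+h) - R t)\<^sup>2 \<le> R 0 (2 R 0 - 2 R h)\<close>.\<close>

lemma positive_definite_function_continuous:
  assumes pd: "positive_definite_function R" and even: "\<And>t. R (-t) = R t"
    and cont0: "isCont R 0"
  shows "continuous_on UNIV R"
proof (intro continuous_at_imp_continuous_on ballI)
  fix t :: real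
  have q: "(R (t+h) - R t)^2 \<le> R 0 * (2*R 0 - 2*R h)" for h
  proof (rule discriminant_le_if_quadratic_nonneg)
    show "0 \<le> 2*R 0 - 2*R h" using positive_definite_function_le_0[OF pd even, of h] by simp
    fix l :: real
    let ?c = "\<lambda>k::int. if k = 0 then 1 else if k = 1 then l else -l"
    let ?x = "\<lambda>k::int. if k = 0 then 0 else if k = 1 then t+h else t"
    have "0 \<le> (\<Sum>k\<in>{0,1,2}. \<Sum>j\<in>{0,1,2}. ?c k * ?c j * R (?x k - ?x j))"
      by (rule positive_definite_functionD[OF pd]) simp
    moreover have "R (- h - t) = R (h + t)" using even[of "h+t"] by simp
    ultimately show "0 \<le> R 0 + 2*l*(R (t+h) - R t) + l^2*(2*R 0 - 2*R h)"
      by (simp add: even algebra_simps power2_eq_square)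
  qed
  have bound: "norm (R (t+h) - R t) \<le> sqrt (R 0 * (2*R 0 - 2*R h))" for h
    using real_le_rsqrt[of "\<bar>R (t+h) - R t\<bar>"] q[of h] by simp
  have "((\<lambda>h. sqrt (R 0 * (2*R 0 - 2*R h))) \<longlongrightarrow> sqrt (R 0 * (2*R 0 - 2*R 0))) (at 0)"
    by (intro tendsto_intros cont0[unfolded isCont_def])
  then have "((\<lambda>h. sqrt (R 0 * (2*R 0 - 2*R h))) \<longlongrightarrow> 0) (at 0)" by simp
  then have "((\<lambda>h. R (t+h) - R t) \<longlongrightarrow> 0) (at 0)"
    by (rule Lim_null_comparison[rotated]) (intro always_eventually allI, use bound in simp)
  then show "isCont R t" by (simp add: isCont_iff Lim_null[symmetric])
qed

section \<open>The covariance function of a stationary Gaussian process\<close>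

lemma abs_le_one_plus_square: "\<bar>x::real\<bar> \<le> 1 + x^2"
proof (cases "\<bar>x\<bar> \<le> 1")
  case True then show ?thesis by (simp add: add_increasing2)
next
  case False
  then have "\<bar>x\<bar> * 1 \<le> \<bar>x\<bar> * \<bar>x\<bar>" by (intro mult_left_mono) auto
  then show ?thesis by (simp add: power2_eq_square)
qed

lemma lincomb_single: "lincomb X [t] [c] = (\<lambda>\<omega>. c * X t \<omega>)"
  by (simp add: lincomb_def fun_eq_iff)

lemma lincomb_pair: "lincomb X [s,t] [c,d] = (\<lambda>\<omega>. c * X s \<omega> + d * X t \<omega>)"
  by (simp add: lincomb_def fun_eq_iff numeral_2_eq_2 lessThan_Suc)

locale stationary_gaussian_process =
  fixes M :: "'a measure" and X :: "real \<Rightarrow> 'a \<Rightarrow> real"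
  assumes gaussian: "centered_gaussian_process M X"
    and stationary: "stationary_process M X"
begin

sublocale prob_space M
  using gaussian by (simp add: centered_gaussian_process_def)

lemma borel_measurable_X[measurable]: "X t \<in> borel_measurable M"
  using gaussian by (simp add: centered_gaussian_process_def)

lemma borel_measurable_lincomb[measurable]: "lincomb X ts cs \<in> borel_measurable M"
  unfolding lincomb_def by measurable

lemma integrable_lincomb_square:
  "length cs = length ts \<Longrightarrow> integrable M (\<lambda>\<omega>. (lincomb X ts cs \<omega>)\<^sup>2)"
  using gaussian by (simp add: centered_gaussian_process_def)

lemma char_lincomb:
  "length cs = length ts \<Longrightarrow> char (distr M borel (lincomb X ts cs)) \<theta> =
     complex_of_real (exp (- (\<theta>\<^sup>2 * (LINT \<omega>|M. (lincomb X ts cs \<omega>)\<^sup>2)) / 2))"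
  using gaussian unfolding centered_gaussian_process_def by blast

lemma integrable_X_square: "integrable M (\<lambda>\<omega>. (X s \<omega>)^2)"
  using integrable_lincomb_square[of "[1]" "[s]"] by (simp add: lincomb_single)

lemma integrable_X_add_square: "integrable M (\<lambda>\<omega>. (X s \<omega> + X t \<omega>)^2)"
  using integrable_lincomb_square[of "[1,1]" "[s,t]"] by (simp add: lincomb_pair)

lemma integrable_X: "integrable M (X t)"
proof (rule Bochner_Integration.integrable_bound[of _ "\<lambda>\<omega>. 1 + (X t \<omega>)^2"])
  show "integrable M (\<lambda>\<omega>. 1 + (X t \<omega>)^2)" using integrable_X_square by simp
  show "AE \<omega> in M. norm (X t \<omega>) \<le> norm (1 + (X t \<omega>)^2)"
    using abs_le_one_plus_square by (intro AE_I2) (simp add: add_nonneg_nonneg)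
qed simp

lemma X_mult_X_polarization:
  "X s \<omega> * X t \<omega> = ((X s \<omega> + X t \<omega>)^2 - (X s \<omega>)^2 - (X t \<omega>)^2) / 2"
  by (simp add: power2_eq_square algebra_simps)

lemma integrable_X_mult_X: "integrable M (\<lambda>\<omega>. X s \<omega> * X t \<omega>)"
  unfolding X_mult_X_polarization
  by (intro integrable_divide Bochner_Integration.integrable_diff integrable_X_square integrable_X_add_square)

lemma expectation_lincomb_shift:
  fixes f :: "real \<Rightarrow> real"
  assumes "length cs = length ts" and [measurable]: "f \<in> borel_measurable borel"
  shows "expectation (\<lambda>\<omega>. f (lincomb X (map (\<lambda>t. t + h) ts) cs \<omega>)) =
         expectation (\<lambda>\<omega>. f (lincomb X ts cs \<omega>))"
proof -
  have "distr M borel (lincomb X (map (\<lambda>t. t + h) ts) cs) = distr M borel (lincomb X ts cs)"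
    using stationary assms(1) by (simp add: stationary_process_def)
  then show ?thesis
    using integral_distr[of "lincomb X (map (\<lambda>t. t + h) ts) cs" M borel f]
      integral_distr[of "lincomb X ts cs" M borel f] by simp
qed

lemma expectation_X_shift: "expectation (X (t + h)) = expectation (X t)"
  using expectation_lincomb_shift[of "[1]" "[t]" "\<lambda>x. x" h] by (simp add: lincomb_single)

lemma expectation_X_mult_X_shift:
  "expectation (\<lambda>\<omega>. X (s + h) \<omega> * X (t + h) \<omega>) = expectation (\<lambda>\<omega>. X s \<omega> * X t \<omega>)"
proof -
  have square: "expectation (\<lambda>\<omega>. (X (t + h) \<omega>)^2) = expectation (\<lambda>\<omega>. (X t \<omega>)^2)" for t
    using expectation_lincomb_shift[of "[1]" "[t]" "\<lambda>x. x^2" h] by (simp add: lincomb_single)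
  have sum_square:
    "expectation (\<lambda>\<omega>. (X (s + h) \<omega> + X (t + h) \<omega>)^2) = expectation (\<lambda>\<omega>. (X s \<omega> + X t \<omega>)^2)"
    using expectation_lincomb_shift[of "[1,1]" "[s,t]" "\<lambda>x. x^2" h] by (simp add: lincomb_pair)
  have polarization: "expectation (\<lambda>\<omega>. X s \<omega> * X t \<omega>) =
      (expectation (\<lambda>\<omega>. (X s \<omega> + X t \<omega>)^2) - expectation (\<lambda>\<omega>. (X s \<omega>)^2)
       - expectation (\<lambda>\<omega>. (X t \<omega>)^2)) / 2" for s t
    unfolding X_mult_X_polarization
    by (simp add: integrable_X_square integrable_X_add_square)
  show ?thesis by (simp only: polarization square sum_square)
qed

definition mean :: real where "mean = expectation (X 0)"

definition covariance :: "real \<Rightarrow> real" where "covariance t = cov M (X 0) (X t)"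

lemma expectation_X: "expectation (X t) = mean"
  using expectation_X_shift[of 0 t] by (simp add: mean_def)

lemma integrable_centered_product: "integrable M (\<lambda>\<omega>. (X s \<omega> - mean) * (X t \<omega> - mean))"
proof -
  have "(\<lambda>\<omega>. (X s \<omega> - mean) * (X t \<omega> - mean)) =
        (\<lambda>\<omega>. X s \<omega> * X t \<omega> - mean * X t \<omega> - mean * X s \<omega> + mean^2)"
    by (simp add: fun_eq_iff algebra_simps power2_eq_square)
  then show ?thesis by (simp add: integrable_X_mult_X integrable_X)
qed

lemma cov_X: "cov M (X s) (X t) = expectation (\<lambda>\<omega>. (X s \<omega> - mean) * (X t \<omega> - mean))"
  by (simp add: cov_def expectation_X)

lemma cov_X_eq_moment: "cov M (X s) (X t) = expectation (\<lambda>\<omega>. X s \<omega> * X t \<omega>) - mean^2"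
proof -
  have "cov M (X s) (X t) =
      expectation (\<lambda>\<omega>. X s \<omega> * X t \<omega> - mean * X t \<omega> - mean * X s \<omega> + mean^2)"
    unfolding cov_X by (simp add: algebra_simps power2_eq_square)
  also have "\<dots> = expectation (\<lambda>\<omega>. X s \<omega> * X t \<omega>) - mean^2"
    by (simp add: integrable_X_mult_X integrable_X expectation_X prob_space power2_eq_square)
  finally show ?thesis .
qed

lemma covariance_diff: "covariance (t - s) = cov M (X s) (X t)"
  using expectation_X_mult_X_shift[of 0 s "t - s"] by (simp add: covariance_def cov_X_eq_moment)

lemma covariance_even: "covariance (-t) = covariance t"
  using covariance_diff[of 0 t] covariance_diff[of t 0]
  by (simp add: cov_X_eq_moment mult.commute)

lemma covariance_positive_definite: "positive_definite_function covariance"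
  unfolding positive_definite_function_def
proof (intro allI impI)
  fix K :: "int set" and c :: "int \<Rightarrow> real" and x :: "int \<Rightarrow> real"
  assume fin: "finite K"
  let ?Y = "\<lambda>k \<omega>. X (x k) \<omega> - mean"
  have "(\<Sum>k\<in>K. \<Sum>l\<in>K. c k * c l * covariance (x k - x l)) =
        (\<Sum>k\<in>K. \<Sum>l\<in>K. expectation (\<lambda>\<omega>. c k * c l * (?Y l \<omega> * ?Y k \<omega>)))"
    by (simp add: covariance_diff cov_X)
  also have "\<dots> = (\<Sum>k\<in>K. expectation (\<lambda>\<omega>. \<Sum>l\<in>K. c k * c l * (?Y l \<omega> * ?Y k \<omega>)))"
    by (intro sum.cong refl Bochner_Integration.integral_sum[symmetric] integrable_mult_right
        integrable_centered_product)
  also have "\<dots> = expectation (\<lambda>\<omega>. \<Sum>k\<in>K. \<Sum>l\<in>K. c k * c l * (?Y l \<omega> * ?Y k \<omega>))"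
    by (intro Bochner_Integration.integral_sum[symmetric] Bochner_Integration.integrable_sum
        integrable_mult_right integrable_centered_product)
  also have "\<dots> = expectation (\<lambda>\<omega>. (\<Sum>k\<in>K. c k * ?Y k \<omega>)^2)"
    unfolding power2_eq_square sum_product
    by (rule Bochner_Integration.integral_cong[OF refl], intro sum.cong refl) (simp add: ac_simps)
  also have "\<dots> \<ge> 0" by simp
  finally show "0 \<le> (\<Sum>k\<in>K. \<Sum>l\<in>K. c k * c l * covariance (x k - x l))" .
qed

lemma expectation_increment_square:
  "expectation (\<lambda>\<omega>. (X h \<omega> - X 0 \<omega>)^2) = 2 * covariance 0 - 2 * covariance h"
proof -
  have "(\<lambda>\<omega>. (X h \<omega> - X 0 \<omega>)^2) = (\<lambda>\<omega>. (X h \<omega> - mean) * (X h \<omega> - mean)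
      - 2 * ((X 0 \<omega> - mean) * (X h \<omega> - mean)) + (X 0 \<omega> - mean) * (X 0 \<omega> - mean))"
    by (simp add: fun_eq_iff power2_eq_square algebra_simps)
  then have "expectation (\<lambda>\<omega>. (X h \<omega> - X 0 \<omega>)^2) = cov M (X h) (X h) - 2 * cov M (X 0) (X h) + cov M (X 0) (X 0)"
    by (simp add: cov_X integrable_centered_product)
  then show ?thesis using covariance_diff[of h h] by (simp add: covariance_def)
qed

lemma continuous_on_iexp: "continuous_on UNIV iexp"
  by (intro continuous_at_imp_continuous_on ballI isCont_iexp)

lemma expectation_iexp_increment:
  "(CLINT \<omega>|M. iexp (X h \<omega> - X 0 \<omega>)) = complex_of_real (exp (covariance h - covariance 0))"
proof -
  have "lincomb X [h,0] [1,-1] = (\<lambda>\<omega>. X h \<omega> - X 0 \<omega>)"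
    by (simp add: lincomb_pair)
  then have "char (distr M borel (\<lambda>\<omega>. X h \<omega> - X 0 \<omega>)) 1 =
      complex_of_real (exp (- (2 * covariance 0 - 2 * covariance h) / 2))"
    using char_lincomb[of "[1,-1]" "[h,0]" 1] by (simp only: expectation_increment_square) simp
  moreover have "char (distr M borel (\<lambda>\<omega>. X h \<omega> - X 0 \<omega>)) 1 = (CLINT \<omega>|M. iexp (X h \<omega> - X 0 \<omega>))"
    unfolding char_def
    by (subst integral_distr) (auto intro: borel_measurable_continuous_on[OF continuous_on_iexp])
  ultimately show ?thesis by simp
qed

lemma isCont_covariance_0:
  assumes paths: "\<forall>\<omega>\<in>space M. continuous_on UNIV (\<lambda>t. X t \<omega>)"
  shows "isCont covariance 0"
  unfolding isCont_def
proof (subst tendsto_at_iff_sequentially, intro allI impI)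
  fix hs :: "nat \<Rightarrow> real" assume hs: "hs \<longlonglongrightarrow> 0"
  have dominated: "(\<lambda>n. CLINT \<omega>|M. iexp (X (hs n) \<omega> - X 0 \<omega>)) \<longlonglongrightarrow> (CLINT \<omega>|M. 1)"
  proof (rule integral_dominated_convergence[where w="\<lambda>_. 1"])
    show "(\<lambda>\<omega>. iexp (X (hs n) \<omega> - X 0 \<omega>)) \<in> borel_measurable M" for n
      by (rule borel_measurable_continuous_on[OF continuous_on_iexp]) simp
    show "AE \<omega> in M. (\<lambda>n. iexp (X (hs n) \<omega> - X 0 \<omega>)) \<longlonglongrightarrow> 1"
    proof (rule AE_I2)
      fix \<omega> assume "\<omega> \<in> space M"
      then have "isCont (\<lambda>t. X t \<omega>) 0" using paths by (simp add: continuous_on_eq_continuous_at)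
      then have "(\<lambda>n. X (hs n) \<omega>) \<longlonglongrightarrow> X 0 \<omega>" by (rule isCont_tendsto_compose[OF _ hs])
      then have "(\<lambda>n. X (hs n) \<omega> - X 0 \<omega>) \<longlonglongrightarrow> X 0 \<omega> - X 0 \<omega>" by (intro tendsto_intros)
      then have "(\<lambda>n. iexp (X (hs n) \<omega> - X 0 \<omega>)) \<longlonglongrightarrow> iexp (X 0 \<omega> - X 0 \<omega>)"
        by (rule isCont_tendsto_compose[OF isCont_iexp])
      then show "(\<lambda>n. iexp (X (hs n) \<omega> - X 0 \<omega>)) \<longlonglongrightarrow> 1" by simp
    qed
  qed auto
  have "(CLINT \<omega>|M. (1::complex)) = 1" by (simp add: prob_space)
  with dominated have "(\<lambda>n. complex_of_real (exp (covariance (hs n) - covariance 0))) \<longlonglongrightarrow> complex_of_real 1"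
    by (simp only: expectation_iexp_increment of_real_1)
  then have "(\<lambda>n. ln (exp (covariance (hs n) - covariance 0))) \<longlonglongrightarrow> ln 1"
    unfolding tendsto_of_real_iff by (intro tendsto_intros) auto
  then have "(\<lambda>n. covariance (hs n) - covariance 0) \<longlonglongrightarrow> 0" by simp
  then show "(covariance \<circ> hs) \<longlonglongrightarrow> covariance 0"
    by (simp add: Lim_null[symmetric] comp_def)
qed

lemma continuous_covariance:
  assumes "\<forall>\<omega>\<in>space M. continuous_on UNIV (\<lambda>t. X t \<omega>)"
  shows "continuous_on UNIV covariance"
  using positive_definite_function_continuous[OF covariance_positive_definite]
    covariance_even isCont_covariance_0[OF assms] by blast

end

section \<open>Discretising finite Borel measures on a bounded interval\<close>

definition bounded_borel_measure :: "real \<Rightarrow> real measure \<Rightarrow> bool" where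
  "bounded_borel_measure C N \<longleftrightarrow>
     finite_measure N \<and> sets N = sets (restrict_space borel (space N)) \<and> space N \<subseteq> {-C..C}"

text \<open>Positive definiteness passes from finite sums to finite measures by rounding both variables
  down to the mesh \<open>1/(n+1)\<close>: the double integral becomes a finite quadratic form.\<close>

definition grid :: "nat \<Rightarrow> real \<Rightarrow> real" where
  "grid n u = real_of_int \<lfloor>real (Suc n) * u\<rfloor> / real (Suc n)"

definition grid_indices :: "nat \<Rightarrow> real \<Rightarrow> int set" where
  "grid_indices n C = {-(\<lceil>real (Suc n) * C\<rceil> + 1) .. \<lceil>real (Suc n) * C\<rceil> + 1}"

definition grid_cell :: "nat \<Rightarrow> int \<Rightarrow> real set" where
  "grid_cell n l = {u. \<lfloor>real (Suc n) * u\<rfloor> = l}"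

lemma finite_grid_indices[simp]: "finite (grid_indices n C)"
  by (simp add: grid_indices_def)

lemma borel_measurable_floor_scaled[measurable]:
  "(\<lambda>v. real_of_int \<lfloor>real (Suc n) * v\<rfloor>) \<in> borel_measurable borel"
  by (rule measurable_compose[OF _ borel_measurable_real_floor]) simp

lemma borel_measurable_grid[measurable]: "grid n \<in> borel_measurable borel"
  unfolding grid_def by measurable

lemma grid_cell_in_borel: "grid_cell n l \<in> sets borel"
proof -
  have "grid_cell n l = (\<lambda>u. real_of_int \<lfloor>real (Suc n) * u\<rfloor>) -` {real_of_int l}"
    by (auto simp: grid_cell_def)
  then show ?thesis
    using measurable_sets_borel[OF borel_measurable_floor_scaled[of n], of "{real_of_int l}"] by simp
qed

lemma floor_in_grid_indices:
  assumes "\<bar>u\<bar> \<le> C"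
  shows "\<lfloor>real (Suc n) * u\<rfloor> \<in> grid_indices n C"
proof -
  let ?N = "real (Suc n)"
  have bounds: "-(?N*C) \<le> ?N*u" "?N*u \<le> ?N*C"
    using assms mult_left_mono[of u C ?N] mult_left_mono[of "-C" u ?N] by (auto simp: abs_le_iff)
  have ceiling: "?N*C \<le> real_of_int \<lceil>?N*C\<rceil>" by (rule le_of_int_ceiling)
  have floor: "real_of_int \<lfloor>?N*u\<rfloor> \<le> ?N*u" "?N*u < real_of_int \<lfloor>?N*u\<rfloor> + 1"
    by linarith+
  have "-(real_of_int \<lceil>?N*C\<rceil>) - 1 < real_of_int \<lfloor>?N*u\<rfloor> + 1"
    "real_of_int \<lfloor>?N*u\<rfloor> \<le> real_of_int \<lceil>?N*C\<rceil> + 1"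
    using bounds ceiling floor by linarith+
  then have "real_of_int (-(\<lceil>?N*C\<rceil> + 1)) < real_of_int (\<lfloor>?N*u\<rfloor> + 1)"
    "real_of_int \<lfloor>?N*u\<rfloor> \<le> real_of_int (\<lceil>?N*C\<rceil> + 1)"
    by simp_all
  then show ?thesis unfolding grid_indices_def of_int_less_iff of_int_le_iff by simp
qed

lemma grid_tendsto: "(\<lambda>n. grid n u) \<longlonglongrightarrow> u"
proof -
  have bound: "norm (grid n u - u) \<le> 1 / real (Suc n)" for n
  proof -
    let ?N = "real (Suc n)"
    have "grid n u - u = (real_of_int \<lfloor>?N*u\<rfloor> - ?N*u) / ?N"
      by (simp add: grid_def field_simps)
    moreover have "\<bar>real_of_int \<lfloor>?N*u\<rfloor> - ?N*u\<bar> \<le> 1" by linarith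
    ultimately show ?thesis by (simp add: abs_divide divide_right_mono)
  qed
  have "(\<lambda>n. 1 / real (Suc n)) \<longlonglongrightarrow> 0"
    using LIMSEQ_Suc[OF lim_1_over_n] by simp
  then have "(\<lambda>n. grid n u - u) \<longlonglongrightarrow> 0"
    by (rule Lim_null_comparison[rotated]) (use bound in simp)
  then show ?thesis by (simp add: Lim_null[symmetric])
qed

lemma measurable_if_bounded_borel_measure:
  assumes "bounded_borel_measure C N" "f \<in> borel_measurable borel"
  shows "f \<in> borel_measurable N"
  using assms unfolding bounded_borel_measure_def
  by (subst measurable_cong_sets[of N "restrict_space borel (space N)"])
     (auto intro: measurable_restrict_space1)

lemma integral_grid_eq_sum:
  assumes N: "bounded_borel_measure C N"
  shows "(\<integral>v. h (grid n v) \<partial>N) =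
         (\<Sum>l\<in>grid_indices n C. h (real_of_int l / real (Suc n)) * measure N (grid_cell n l \<inter> space N))"
proof -
  have fin: "finite_measure N" and sN: "sets N = sets (restrict_space borel (space N))"
    and bounded: "space N \<subseteq> {-C..C}"
    using N by (simp_all add: bounded_borel_measure_def)
  interpret finite_measure N by (rule fin)
  have cell_sets: "grid_cell n l \<inter> space N \<in> sets N" for l
    unfolding sN sets_restrict_space using grid_cell_in_borel[of n l] by blast
  have pointwise: "h (grid n v) = (\<Sum>l\<in>grid_indices n C.
      h (real_of_int l / real (Suc n)) * indicator (grid_cell n l \<inter> space N) v)"
    if v: "v \<in> space N" for v
  proof -
    have "\<bar>v\<bar> \<le> C" using v bounded by (auto simp: abs_le_iff)
    then have k: "\<lfloor>real (Suc n) * v\<rfloor> \<in> grid_indices n C" by (rule floor_in_grid_indices)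
    have "(\<Sum>l\<in>grid_indices n C. h (real_of_int l / real (Suc n)) * indicator (grid_cell n l \<inter> space N) v)
        = (\<Sum>l\<in>grid_indices n C. if l = \<lfloor>real (Suc n) * v\<rfloor> then h (real_of_int l / real (Suc n)) else 0)"
      by (rule sum.cong) (auto simp: indicator_def grid_cell_def v)
    also have "\<dots> = h (grid n v)"
      by (simp only: sum.delta[OF finite_grid_indices] if_P[OF k] grid_def)
    finally show ?thesis by (rule sym)
  qed
  have "(\<integral>v. h (grid n v) \<partial>N) = (\<integral>v. (\<Sum>l\<in>grid_indices n C.
      h (real_of_int l / real (Suc n)) * indicator (grid_cell n l \<inter> space N) v) \<partial>N)"
    by (rule Bochner_Integration.integral_cong[OF refl pointwise])
  also have "\<dots> = (\<Sum>l\<in>grid_indices n C.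
      (\<integral>v. h (real_of_int l / real (Suc n)) * indicator (grid_cell n l \<inter> space N) v \<partial>N))"
    by (rule Bochner_Integration.integral_sum)
       (auto intro!: integrable_mult_right simp: cell_sets emeasure_real less_top[symmetric])
  also have "\<dots> = (\<Sum>l\<in>grid_indices n C. h (real_of_int l / real (Suc n)) * measure N (grid_cell n l \<inter> space N))"
    by (simp add: Int_assoc)
  finally show ?thesis .
qed

lemma (in finite_measure) norm_integral_le_const_measure:
  fixes g :: "'a \<Rightarrow> real"
  assumes "\<And>v. v \<in> space M \<Longrightarrow> norm (g v) \<le> B" "0 \<le> B"
  shows "norm (\<integral>v. g v \<partial>M) \<le> B * measure M (space M)"
proof -
  have "norm (\<integral>v. g v \<partial>M) \<le> (\<integral>v. norm (g v) \<partial>M)" by (rule Bochner_Integration.integral_norm_bound)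
  also have "\<dots> \<le> (\<integral>v. B \<partial>M)" by (rule integral_mono') (use assms in auto)
  finally show ?thesis by (simp add: mult.commute)
qed

lemma bounded_borel_measure_lebesgue_on:
  assumes "{\<alpha>..\<beta>} \<subseteq> {-C..C}"
  shows "bounded_borel_measure C (restrict_space lborel {\<alpha>..\<beta>})"
proof -
  have "finite_measure (restrict_space lborel {\<alpha>..\<beta>})"
    by (rule finite_measureI) (simp add: space_restrict_space emeasure_restrict_space emeasure_lborel_Icc_eq)
  moreover have "sets (restrict_space lborel {\<alpha>..\<beta>}) = sets (restrict_space borel {\<alpha>..\<beta>})"
    by (simp add: sets_restrict_space)
  ultimately show ?thesis
    using assms by (simp add: bounded_borel_measure_def space_restrict_space)
qed

lemma space_prob_measures_01: "\<mu> \<in> prob_measures_01 \<Longrightarrow> space \<mu> = {0..1}"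
  using sets_eq_imp_space_eq[of \<mu> "restrict_space borel {0..1}"]
  by (simp add: prob_measures_01_def space_restrict_space)

lemma bounded_borel_measure_prob_measures_01:
  assumes "\<mu> \<in> prob_measures_01" "1 \<le> C"
  shows "bounded_borel_measure C \<mu>"
  using assms space_prob_measures_01[OF assms(1)]
  by (auto simp: bounded_borel_measure_def prob_measures_01_def prob_space_def)

lemma lebesgue_01_in_prob_measures_01: "restrict_space lborel {0..1::real} \<in> prob_measures_01"
proof -
  have "prob_space (restrict_space lborel {0..1::real})"
    by (rule prob_spaceI) (simp add: space_restrict_space emeasure_restrict_space)
  then show ?thesis
    by (simp add: prob_measures_01_def sets_restrict_space)
qed
section \<open>The energy of an integrable positive definite function\<close>

locale integrable_positive_definite_function =
  fixes R :: "real \<Rightarrow> real"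
  assumes continuous: "continuous_on UNIV R"
    and even: "\<And>t. R (-t) = R t"
    and positive: "\<And>t. 0 < R t"
    and positive_definite: "positive_definite_function R"
    and integrable: "set_integrable lborel {0..} R"
begin

definition primitive :: "real \<Rightarrow> real" where
  "primitive x = (LBINT s=ereal 0..ereal x. R s)"

definition R_integral :: real where
  "R_integral = (LINT t:{0..}|lborel. R t)"

lemma borel_measurable_R[measurable]: "R \<in> borel_measurable borel"
  using borel_measurable_continuous_onI[OF continuous] .

lemma isCont_R: "isCont R x"
  using continuous by (simp add: continuous_on_eq_continuous_at)

lemma abs_R_le: "\<bar>R t\<bar> \<le> R 0"
  using positive[of t] positive_definite_function_le_0[OF positive_definite even] by simp

lemma primitive_has_derivative: "(primitive has_real_derivative R x) (at x)"
proof -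
  have "((\<lambda>u. LBINT y=ereal 0..u. R y) has_vector_derivative (R x)) (at x within {-\<bar>x\<bar>-1..\<bar>x\<bar>+1})"
    by (rule interval_integral_FTC2) (auto intro: continuous_on_subset[OF continuous])
  moreover have "at x within {-\<bar>x\<bar>-1..\<bar>x\<bar>+1} = at x"
    by (rule at_within_Icc_at) auto
  moreover have "primitive = (\<lambda>u. LBINT y=ereal 0..u. R y)"
    by (simp add: primitive_def fun_eq_iff)
  ultimately show ?thesis
    by (simp add: has_real_derivative_iff_has_vector_derivative)
qed

lemma primitive_has_derivative_chain[derivative_intros]:
  "(g has_real_derivative g') (at x) \<Longrightarrow>
     ((\<lambda>x. primitive (g x)) has_real_derivative R (g x) * g') (at x)"
  by (rule DERIV_chain2[OF primitive_has_derivative])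

lemma borel_measurable_primitive[measurable]: "primitive \<in> borel_measurable borel"
  using DERIV_isCont[OF primitive_has_derivative]
  by (intro borel_measurable_continuous_onI) (simp add: continuous_on_eq_continuous_at)

lemma primitive_0: "primitive 0 = 0"
  by (simp add: primitive_def)

lemma primitive_minus: "primitive (-x) = - primitive x"
proof -
  have "((\<lambda>x. primitive x + primitive (-x)) has_real_derivative 0) (at y)" for y
    using primitive_has_derivative[of y] primitive_has_derivative_chain[OF DERIV_minus[OF DERIV_ident]]
    by (auto intro!: DERIV_add[THEN DERIV_cong] simp: even)
  from DERIV_isconst_all[OF allI[OF this], of x 0] show ?thesis by (simp add: primitive_0)
qed

lemma primitive_strict_mono: "x < y \<Longrightarrow> primitive x < primitive y"
  by (rule DERIV_pos_imp_increasing) (use primitive_has_derivative positive in blast)+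

lemma primitive_mono: "x \<le> y \<Longrightarrow> primitive x \<le> primitive y"
  using primitive_strict_mono by (cases "x = y") (auto simp: order_le_less)

lemma primitive_nonneg: "0 \<le> x \<Longrightarrow> 0 \<le> primitive x"
  using primitive_mono[of 0 x] by (simp add: primitive_0)

lemma primitive_eq_set_integral: "0 \<le> x \<Longrightarrow> primitive x = (LINT t:{0..x}|lborel. R t)"
  by (simp add: primitive_def interval_integral_Icc)

lemma R_integral_nonneg: "0 \<le> R_integral"
  unfolding R_integral_def set_lebesgue_integral_def
  using positive by (intro Bochner_Integration.integral_nonneg) (auto simp: indicator_def less_imp_le)

lemma primitive_le_R_integral: "primitive x \<le> R_integral"
proof (cases "0 \<le> x")
  case True
  have "(LINT t:{0..x}|lborel. R t) \<le> R_integral"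
    unfolding R_integral_def set_lebesgue_integral_def
    using integrable positive unfolding set_integrable_def
    by (intro integral_mono') (auto simp: indicator_def less_imp_le)
  then show ?thesis using primitive_eq_set_integral[OF True] by simp
next
  case False
  then show ?thesis
    using primitive_mono[of x 0] R_integral_nonneg by (simp add: primitive_0)
qed

lemma abs_primitive_le: "\<bar>primitive x\<bar> \<le> R_integral"
  using primitive_le_R_integral[of x] primitive_le_R_integral[of "-x"] primitive_minus[of x] by simp

lemma R_integral_pos: "0 < R_integral"
  using primitive_le_R_integral[of 1] primitive_strict_mono[of 0 1] by (simp add: primitive_0)

lemma primitive_tendsto: "(primitive \<longlongrightarrow> R_integral) at_top"
proof -
  have "((\<lambda>b. LINT t:{0..b}|lborel. R t) \<longlongrightarrow> R_integral) at_top"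
    unfolding R_integral_def by (rule tendsto_set_lebesgue_integral_at_top) (auto simp: integrable)
  moreover have "eventually (\<lambda>b. (LINT t:{0..b}|lborel. R t) = primitive b) at_top"
    using eventually_ge_at_top[of 0] by eventually_elim (simp add: primitive_eq_set_integral)
  ultimately show ?thesis by (rule Lim_transform_eventually)
qed

lemma primitive_mult_tendsto: "0 < c \<Longrightarrow> ((\<lambda>a. primitive (a * c)) \<longlongrightarrow> R_integral) at_top"
  by (rule filterlim_compose[OF primitive_tendsto])
     (simp add: filterlim_at_top_mult_tendsto_pos[OF tendsto_const _ filterlim_ident])

lemma set_integral_R_scaled:
  assumes "\<alpha> \<le> \<beta>" "0 < a"
  shows "(LINT v:{\<alpha>..\<beta>}|lborel. R (a*(u-v))) = (primitive (a*(u-\<alpha>)) - primitive (a*(u-\<beta>))) / a"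
proof -
  have "(LINT v:{\<alpha>..\<beta>}|lborel. R (a*(u-v))) = (LBINT v=\<alpha>..\<beta>. R (a*(u-v)))"
    by (simp add: interval_integral_Icc assms)
  also have "\<dots> = (- primitive (a*(u-\<beta>)) / a) - (- primitive (a*(u-\<alpha>)) / a)"
  proof (rule interval_integral_FTC_finite)
    show "continuous_on {min \<alpha> \<beta>..max \<alpha> \<beta>} (\<lambda>v. R (a * (u - v)))"
      by (intro continuous_on_compose2[OF continuous] continuous_intros) auto
    fix x
    have "((\<lambda>v. - primitive (a*(u-v)) / a) has_real_derivative R (a*(u-x))) (at x)"
      using assms by (auto intro!: derivative_eq_intros)
    then show "((\<lambda>v. - primitive (a*(u-v)) / a) has_vector_derivative R (a*(u-x)))
        (at x within {min \<alpha> \<beta>..max \<alpha> \<beta>})"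
      by (simp add: has_real_derivative_iff_has_vector_derivative[symmetric] has_field_derivative_at_within)
  qed
  finally show ?thesis by (simp add: diff_divide_distrib)
qed

lemma scaled_set_integral_R_unit:
  assumes "0 < a"
  shows "a * (LINT v:{0..1}|lborel. R (a*(u-v))) = primitive (a*u) + primitive (a*(1-u))"
proof -
  have "(LINT v:{0..1}|lborel. R (a*(u-v))) = (primitive (a*u) + primitive (a*(1-u))) / a"
    using set_integral_R_scaled[of 0 1 a u] primitive_minus[of "a*(1-u)"] assms
    by (simp add: algebra_simps)
  then show ?thesis using assms by simp
qed

lemma scaled_uniform_energy_tendsto:
  "((\<lambda>a. a * (LINT u:{0..1}|lborel. (LINT v:{0..1}|lborel. R (a*(u-v))))) \<longlongrightarrow> 2 * R_integral) at_top"
proof -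
  let ?f = "\<lambda>a u. indicator {0..1} u *\<^sub>R (primitive (a*u) + primitive (a*(1-u)))"
  have eq: "eventually (\<lambda>a. (\<integral>u. ?f a u \<partial>lborel) =
      a * (LINT u:{0..1}|lborel. (LINT v:{0..1}|lborel. R (a*(u-v))))) at_top"
    using eventually_gt_at_top[of 0]
    by eventually_elim
       (simp add: set_lebesgue_integral_def scaled_set_integral_R_unit[symmetric] mult.left_commute)
  have "((\<lambda>a. \<integral>u. ?f a u \<partial>lborel) \<longlongrightarrow> (\<integral>u. indicator {0..1::real} u *\<^sub>R (2 * R_integral) \<partial>lborel)) at_top"
  proof (rule integral_dominated_convergence_at_top[where w="\<lambda>u. indicator {0..1} u *\<^sub>R (2 * R_integral)"])
    show "integrable lborel (\<lambda>u::real. indicator {0..1} u *\<^sub>R (2 * R_integral))"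
      by (rule borel_integrable_compact) (auto simp: compact_Icc)
    show "AE u in lborel. ((\<lambda>a. ?f a u) \<longlongrightarrow> indicator {0..1} u *\<^sub>R (2 * R_integral)) at_top"
      using AE_lborel_singleton[of 0] AE_lborel_singleton[of 1]
    proof eventually_elim
      case (elim u)
      then show ?case
        using tendsto_add[OF primitive_mult_tendsto[of u] primitive_mult_tendsto[of "1-u"]]
        by (cases "u \<in> {0..1}") auto
    qed
    show "\<forall>\<^sub>F a in at_top. AE u in lborel. norm (?f a u) \<le> indicator {0..1} u *\<^sub>R (2 * R_integral)"
      using eventually_gt_at_top[of 0]
    proof eventually_elim
      case (elim a)
      have "norm (?f a u) \<le> indicator {0..1} u *\<^sub>R (2 * R_integral)" for u
        using elim primitive_nonneg[of "a*u"] primitive_nonneg[of "a*(1-u)"]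
          primitive_le_R_integral[of "a*u"] primitive_le_R_integral[of "a*(1-u)"]
        by (cases "u \<in> {0..1}") auto
      then show ?case by (intro AE_I2)
    qed
  qed auto
  then show ?thesis
    using eq by (simp add: Lim_transform_eventually)
qed

definition mutual_energy :: "real \<Rightarrow> real measure \<Rightarrow> real measure \<Rightarrow> real" where
  "mutual_energy a N1 N2 = (\<integral>u. (\<integral>v. R (a*(u-v)) \<partial>N2) \<partial>N1)"

definition grid_mutual_energy :: "nat \<Rightarrow> real \<Rightarrow> real measure \<Rightarrow> real measure \<Rightarrow> real" where
  "grid_mutual_energy n a N1 N2 = (\<integral>u. (\<integral>v. R (a*(grid n u - grid n v)) \<partial>N2) \<partial>N1)"

lemma energy_eq_mutual_energy: "energy R a \<mu> = mutual_energy a \<mu> \<mu>"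
  by (simp add: energy_def mutual_energy_def)

lemma grid_mutual_energy_eq_sum:
  assumes N1: "bounded_borel_measure C N1" and N2: "bounded_borel_measure C N2"
  shows "grid_mutual_energy n a N1 N2 = (\<Sum>k\<in>grid_indices n C. \<Sum>l\<in>grid_indices n C.
      measure N1 (grid_cell n k \<inter> space N1) * measure N2 (grid_cell n l \<inter> space N2)
      * R (a*(real_of_int k / real (Suc n)) - a*(real_of_int l / real (Suc n))))"
proof -
  interpret N1: finite_measure N1 using N1 by (simp add: bounded_borel_measure_def)
  let ?K = "grid_indices n C"
  let ?m1 = "\<lambda>k. measure N1 (grid_cell n k \<inter> space N1)"
  let ?m2 = "\<lambda>k. measure N2 (grid_cell n k \<inter> space N2)"
  let ?N = "real (Suc n)"
  have inner: "(\<integral>v. R (a*(grid n u - grid n v)) \<partial>N2) =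
      (\<Sum>l\<in>?K. R (a*(grid n u - real_of_int l / ?N)) * ?m2 l)" for u
    using integral_grid_eq_sum[OF N2, of "\<lambda>y. R (a*(grid n u - y))" n] by simp
  have outer: "(\<integral>u. R (a*(grid n u - real_of_int l / ?N)) \<partial>N1) =
      (\<Sum>k\<in>?K. R (a*(real_of_int k / ?N - real_of_int l / ?N)) * ?m1 k)" for l
    using integral_grid_eq_sum[OF N1, of "\<lambda>y. R (a*(y - real_of_int l / ?N))" n] by simp
  have "grid_mutual_energy n a N1 N2 = (\<integral>u. (\<Sum>l\<in>?K. R (a*(grid n u - real_of_int l / ?N)) * ?m2 l) \<partial>N1)"
    unfolding grid_mutual_energy_def inner ..
  also have "\<dots> = (\<Sum>l\<in>?K. (\<integral>u. R (a*(grid n u - real_of_int l / ?N)) * ?m2 l \<partial>N1))"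
    by (rule Bochner_Integration.integral_sum)
       (auto intro!: N1.integrable_const_bound[where B="R 0"] measurable_if_bounded_borel_measure[OF N1]
         simp: abs_R_le)
  also have "\<dots> = (\<Sum>l\<in>?K. (\<Sum>k\<in>?K. R (a*(real_of_int k / ?N - real_of_int l / ?N)) * ?m1 k) * ?m2 l)"
    by (simp only: integral_mult_left_zero outer)
  also have "\<dots> = (\<Sum>k\<in>?K. \<Sum>l\<in>?K. ?m1 k * ?m2 l * R (a*(real_of_int k / ?N) - a*(real_of_int l / ?N)))"
    by (subst sum.swap, intro sum.cong refl, subst sum_distrib_right)
       (simp add: right_diff_distrib ac_simps)
  finally show ?thesis .
qed

lemma grid_mutual_energy_tendsto:
  assumes N1: "bounded_borel_measure C N1" and N2: "bounded_borel_measure C N2"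
  shows "(\<lambda>n. grid_mutual_energy n a N1 N2) \<longlonglongrightarrow> mutual_energy a N1 N2"
proof -
  interpret N1: finite_measure N1 using N1 by (simp add: bounded_borel_measure_def)
  interpret N2: finite_measure N2 using N2 by (simp add: bounded_borel_measure_def)
  have inner: "(\<lambda>n. \<integral>v. R (a*(grid n u - grid n v)) \<partial>N2) \<longlonglongrightarrow> (\<integral>v. R (a*(u-v)) \<partial>N2)" for u
  proof (rule integral_dominated_convergence[where w="\<lambda>_. R 0"])
    show "AE v in N2. (\<lambda>n. R (a*(grid n u - grid n v))) \<longlonglongrightarrow> R (a*(u-v))"
      by (intro AE_I2 isCont_tendsto_compose[OF isCont_R] tendsto_intros grid_tendsto)
    show "AE v in N2. norm (R (a*(grid n u - grid n v))) \<le> R 0" for n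
      by (intro AE_I2) (simp add: abs_R_le)
  qed (auto intro: measurable_if_bounded_borel_measure[OF N2])
  text \<open>The discretised inner integrals are finite sums, hence measurable in \<open>u\<close>; their pointwise
    limit is then measurable as well.\<close>
  have grid_measurable: "(\<lambda>u. \<integral>v. R (a*(grid n u - grid n v)) \<partial>N2) \<in> borel_measurable N1" for n
  proof -
    have "(\<lambda>u. \<integral>v. R (a*(grid n u - grid n v)) \<partial>N2) = (\<lambda>u. \<Sum>l\<in>grid_indices n C.
        R (a*(grid n u - real_of_int l / real (Suc n))) * measure N2 (grid_cell n l \<inter> space N2))"
      using integral_grid_eq_sum[OF N2, of "\<lambda>y. R (a*(grid _ _ - y))" n] by (simp add: fun_eq_iff)
    also have "\<dots> \<in> borel_measurable N1" by (rule measurable_if_bounded_borel_measure[OF N1]) simp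
    finally show ?thesis .
  qed
  show ?thesis
    unfolding grid_mutual_energy_def mutual_energy_def
  proof (rule integral_dominated_convergence[where w="\<lambda>_. R 0 * measure N2 (space N2)"])
    show "(\<lambda>u. \<integral>v. R (a*(u-v)) \<partial>N2) \<in> borel_measurable N1"
      by (rule borel_measurable_LIMSEQ_real[OF inner grid_measurable])
    show "AE u in N1. (\<lambda>n. \<integral>v. R (a*(grid n u - grid n v)) \<partial>N2) \<longlonglongrightarrow> (\<integral>v. R (a*(u-v)) \<partial>N2)"
      by (intro AE_I2 inner)
    show "AE u in N1. norm (\<integral>v. R (a*(grid n u - grid n v)) \<partial>N2) \<le> R 0 * measure N2 (space N2)" for n
      using abs_R_le positive[of 0] by (intro AE_I2 N2.norm_integral_le_const_measure) auto
  qed (auto intro: grid_measurable)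
qed

lemma grid_mutual_energy_quadratic_nonneg:
  assumes N1: "bounded_borel_measure C N1" and N2: "bounded_borel_measure C N2"
  shows "0 \<le> grid_mutual_energy n a N1 N1 - 2*t*grid_mutual_energy n a N1 N2
           + t^2 * grid_mutual_energy n a N2 N2"
proof -
  let ?K = "grid_indices n C"
  let ?m1 = "\<lambda>k. measure N1 (grid_cell n k \<inter> space N1)"
  let ?m2 = "\<lambda>k. measure N2 (grid_cell n k \<inter> space N2)"
  let ?x = "\<lambda>k. a*(real_of_int k / real (Suc n))"
  let ?c = "\<lambda>k. ?m1 k - t * ?m2 k"
  have symmetric: "(\<Sum>k\<in>?K. \<Sum>l\<in>?K. ?m2 k * ?m1 l * R (?x k - ?x l)) =
      (\<Sum>k\<in>?K. \<Sum>l\<in>?K. ?m1 k * ?m2 l * R (?x k - ?x l))"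
    using even[of "?x l - ?x k" for l k] by (subst sum.swap) (simp add: ac_simps)
  have "0 \<le> (\<Sum>k\<in>?K. \<Sum>l\<in>?K. ?c k * ?c l * R (?x k - ?x l))"
    by (rule positive_definite_functionD[OF positive_definite finite_grid_indices])
  also have "\<dots> = (\<Sum>k\<in>?K. \<Sum>l\<in>?K. ?m1 k * ?m1 l * R (?x k - ?x l))
      - t * (\<Sum>k\<in>?K. \<Sum>l\<in>?K. ?m1 k * ?m2 l * R (?x k - ?x l))
      - t * (\<Sum>k\<in>?K. \<Sum>l\<in>?K. ?m2 k * ?m1 l * R (?x k - ?x l))
      + t^2 * (\<Sum>k\<in>?K. \<Sum>l\<in>?K. ?m2 k * ?m2 l * R (?x k - ?x l))"
    by (simp add: sum.distrib sum_subtractf sum_distrib_left algebra_simps power2_eq_square)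
  also have "\<dots> = grid_mutual_energy n a N1 N1 - 2*t*grid_mutual_energy n a N1 N2
      + t^2 * grid_mutual_energy n a N2 N2"
    unfolding grid_mutual_energy_eq_sum[OF N1 N1] grid_mutual_energy_eq_sum[OF N1 N2]
      grid_mutual_energy_eq_sum[OF N2 N2] symmetric
    by simp
  finally show ?thesis .
qed

lemma mutual_energy_quadratic_nonneg:
  assumes N1: "bounded_borel_measure C N1" and N2: "bounded_borel_measure C N2"
  shows "0 \<le> mutual_energy a N1 N1 - 2*t*mutual_energy a N1 N2 + t^2 * mutual_energy a N2 N2"
proof (rule LIMSEQ_le_const)
  show "(\<lambda>n. grid_mutual_energy n a N1 N1 - 2*t*grid_mutual_energy n a N1 N2
      + t^2 * grid_mutual_energy n a N2 N2)
      \<longlonglongrightarrow> mutual_energy a N1 N1 - 2*t*mutual_energy a N1 N2 + t^2 * mutual_energy a N2 N2"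
    by (intro tendsto_intros grid_mutual_energy_tendsto[OF N1 N1] grid_mutual_energy_tendsto[OF N1 N2]
        grid_mutual_energy_tendsto[OF N2 N2])
  show "\<exists>N. \<forall>n\<ge>N. 0 \<le> grid_mutual_energy n a N1 N1 - 2*t*grid_mutual_energy n a N1 N2
      + t^2 * grid_mutual_energy n a N2 N2"
    using grid_mutual_energy_quadratic_nonneg[OF N1 N2] by blast
qed

lemma mutual_energy_self_nonneg: "bounded_borel_measure C N \<Longrightarrow> 0 \<le> mutual_energy a N N"
  using mutual_energy_quadratic_nonneg[of C N N a 0] by simp

lemma mutual_energy_Cauchy_Schwarz:
  assumes "bounded_borel_measure C N1" and "bounded_borel_measure C N2"
  shows "(mutual_energy a N1 N2)^2 \<le> mutual_energy a N1 N1 * mutual_energy a N2 N2"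
proof (rule discriminant_le_if_quadratic_nonneg)
  show "0 \<le> mutual_energy a N1 N1 + 2*l*mutual_energy a N1 N2 + l^2 * mutual_energy a N2 N2" for l
    using mutual_energy_quadratic_nonneg[OF assms, of a "-l"] by simp
  show "0 \<le> mutual_energy a N2 N2" by (rule mutual_energy_self_nonneg[OF assms(2)])
qed

definition interval_potential :: "real \<Rightarrow> real \<Rightarrow> real \<Rightarrow> real" where
  "interval_potential a \<delta> u = (primitive (a*(u+\<delta>)) + primitive (a*(1+\<delta>-u))) / a"

lemma integral_lebesgue_on_eq_interval_potential:
  assumes "0 < a" "0 \<le> \<delta>"
  shows "(\<integral>v. R (a*(u-v)) \<partial>restrict_space lborel {-\<delta>..1+\<delta>}) = interval_potential a \<delta> u"
proof -
  have "(\<integral>v. R (a*(u-v)) \<partial>restrict_space lborel {-\<delta>..1+\<delta>}) = (LINT v:{-\<delta>..1+\<delta>}|lborel. R (a*(u-v)))"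
    by (simp add: integral_restrict_space set_lebesgue_integral_def)
  also have "\<dots> = (primitive (a*(u-(-\<delta>))) - primitive (a*(u-(1+\<delta>)))) / a"
    by (rule set_integral_R_scaled) (use assms in auto)
  also have "primitive (a*(u-(1+\<delta>))) = - primitive (a*(1+\<delta>-u))"
    using primitive_minus[of "a*(1+\<delta>-u)"] by (simp add: algebra_simps)
  finally show ?thesis by (simp add: interval_potential_def)
qed

lemma borel_measurable_interval_potential[measurable]:
  "interval_potential a \<delta> \<in> borel_measurable borel"
  unfolding interval_potential_def[abs_def] by measurable

lemma abs_interval_potential_le: "0 < a \<Longrightarrow> \<bar>interval_potential a \<delta> u\<bar> \<le> 2 * R_integral / a"
  using abs_primitive_le[of "a*(u+\<delta>)"] abs_primitive_le[of "a*(1+\<delta>-u)"]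
  by (simp add: interval_potential_def abs_divide divide_right_mono)

lemma interval_potential_ge:
  assumes "0 < a" "u \<in> {0..1}"
  shows "2 * primitive (a*\<delta>) / a \<le> interval_potential a \<delta> u"
  using assms primitive_mono[of "a*\<delta>" "a*(u+\<delta>)"] primitive_mono[of "a*\<delta>" "a*(1+\<delta>-u)"]
  by (auto simp: interval_potential_def divide_right_mono mult_left_mono)

lemma mutual_energy_lebesgue_on_right:
  assumes "0 < a" "0 \<le> \<delta>"
  shows "mutual_energy a N (restrict_space lborel {-\<delta>..1+\<delta>}) = (\<integral>u. interval_potential a \<delta> u \<partial>N)"
  unfolding mutual_energy_def using integral_lebesgue_on_eq_interval_potential[OF assms] by simp

lemma mutual_energy_lebesgue_on_ge:
  assumes \<mu>: "\<mu> \<in> prob_measures_01" and a: "0 < a" and \<delta>: "0 \<le> \<delta>"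
  shows "2 * primitive (a*\<delta>) / a \<le> mutual_energy a \<mu> (restrict_space lborel {-\<delta>..1+\<delta>})"
proof -
  interpret \<mu>: prob_space \<mu> using \<mu> by (simp add: prob_measures_01_def)
  have "interval_potential a \<delta> \<in> borel_measurable \<mu>"
    by (rule measurable_if_bounded_borel_measure[OF bounded_borel_measure_prob_measures_01[OF \<mu> order_refl]])
       simp
  then have "integrable \<mu> (interval_potential a \<delta>)"
    using abs_interval_potential_le[OF a]
    by (intro \<mu>.integrable_const_bound[where B="2 * R_integral / a"]) auto
  then have "(\<integral>u. 2 * primitive (a*\<delta>) / a \<partial>\<mu>) \<le> (\<integral>u. interval_potential a \<delta> u \<partial>\<mu>)"
    using interval_potential_ge[OF a] space_prob_measures_01[OF \<mu>] by (intro integral_mono) auto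
  then show ?thesis by (simp add: mutual_energy_lebesgue_on_right[OF a \<delta>] \<mu>.prob_space)
qed

lemma mutual_energy_lebesgue_on_self_le:
  assumes a: "0 < a" and \<delta>: "0 \<le> \<delta>"
  shows "mutual_energy a (restrict_space lborel {-\<delta>..1+\<delta>}) (restrict_space lborel {-\<delta>..1+\<delta>})
           \<le> (1+2*\<delta>) * (2 * R_integral / a)"
proof -
  let ?L = "restrict_space lborel {-\<delta>..1+\<delta>}"
  interpret L: finite_measure ?L
    using bounded_borel_measure_lebesgue_on[of "-\<delta>" "1+\<delta>" "1+\<delta>"]
    by (simp add: bounded_borel_measure_def)
  have "mutual_energy a ?L ?L \<le> \<bar>\<integral>u. interval_potential a \<delta> u \<partial>?L\<bar>"
    by (simp add: mutual_energy_lebesgue_on_right[OF a \<delta>])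
  also have "\<dots> \<le> 2 * R_integral / a * measure ?L (space ?L)"
    using L.norm_integral_le_const_measure[of "interval_potential a \<delta>" "2 * R_integral / a"]
      abs_interval_potential_le[OF a] R_integral_pos a
    by simp
  also have "measure ?L (space ?L) = 1+2*\<delta>"
    using \<delta> by (simp add: space_restrict_space measure_restrict_space)
  finally show ?thesis by (simp add: mult.commute)
qed

text \<open>Cauchy--Schwarz for the mutual energy of \<open>\<mu>\<close> and Lebesgue measure on \<open>[-\<delta>, 1+\<delta>]\<close>.\<close>

lemma energy_lower_bound:
  assumes \<mu>: "\<mu> \<in> prob_measures_01" and a: "0 < a" and \<delta>: "0 < \<delta>"
  shows "2 * primitive (a*\<delta>)^2 / ((1+2*\<delta>) * R_integral) \<le> a * energy R a \<mu>"
proof -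
  let ?L = "restrict_space lborel {-\<delta>..1+\<delta>}"
  let ?p = "2 * primitive (a*\<delta>) / a"
  have L: "bounded_borel_measure (1+\<delta>) ?L"
    using \<delta> by (intro bounded_borel_measure_lebesgue_on) auto
  have \<mu>_bounded: "bounded_borel_measure (1+\<delta>) \<mu>"
    using \<mu> \<delta> by (intro bounded_borel_measure_prob_measures_01) auto
  have "?p^2 \<le> (mutual_energy a \<mu> ?L)^2"
    using mutual_energy_lebesgue_on_ge[OF \<mu> a] a \<delta> primitive_nonneg[of "a*\<delta>"] by (intro power_mono) auto
  also have "\<dots> \<le> mutual_energy a \<mu> \<mu> * mutual_energy a ?L ?L"
    by (rule mutual_energy_Cauchy_Schwarz[OF \<mu>_bounded L])
  also have "\<dots> \<le> mutual_energy a \<mu> \<mu> * ((1+2*\<delta>) * (2 * R_integral / a))"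
    using \<delta> by (intro mult_left_mono mutual_energy_lebesgue_on_self_le[OF a]
        mutual_energy_self_nonneg[OF \<mu>_bounded]) auto
  finally have bound: "?p^2 \<le> energy R a \<mu> * ((1+2*\<delta>) * (2 * R_integral / a))"
    unfolding energy_eq_mutual_energy .
  have "4 * primitive (a*\<delta>)^2 = a^2 * ?p^2"
    using a by (simp add: power2_eq_square field_simps)
  also have "\<dots> \<le> a^2 * (energy R a \<mu> * ((1+2*\<delta>) * (2 * R_integral / a)))"
    using bound by (rule mult_left_mono) simp
  also have "\<dots> = 2 * ((a * energy R a \<mu>) * ((1+2*\<delta>) * R_integral))"
    using a by (simp add: power2_eq_square field_simps)
  finally have "2 * primitive (a*\<delta>)^2 \<le> (a * energy R a \<mu>) * ((1+2*\<delta>) * R_integral)"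
    by linarith
  moreover have "0 < (1+2*\<delta>) * R_integral" using \<delta> R_integral_pos by simp
  ultimately show ?thesis by (simp add: pos_divide_le_eq)
qed

lemma scaled_min_energy_tendsto:
  "((\<lambda>a. a * Inf (energy R a ` prob_measures_01)) \<longlongrightarrow> 2 * R_integral) at_top"
proof (rule tendsto_sandwich)
  define lower where
    "lower = (\<lambda>a. 2 * primitive (sqrt a)^2 / ((1 + 2 * inverse (sqrt a)) * R_integral))"
  let ?U = "restrict_space lborel {0..1::real}"
  have bdd: "bdd_below (energy R a ` prob_measures_01)" for a
    using mutual_energy_self_nonneg[OF bounded_borel_measure_prob_measures_01]
    by (intro bdd_belowI[of _ 0]) (auto simp: energy_eq_mutual_energy)
  show "eventually (\<lambda>a. lower a \<le> a * Inf (energy R a ` prob_measures_01)) at_top"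
    using eventually_gt_at_top[of 0]
  proof eventually_elim
    case (elim a)
    text \<open>The choice \<open>\<delta> = a\<^sup>-\<^sup>1\<^sup>/\<^sup>2\<close> lets both \<open>a\<delta> \<rightarrow> \<infinity>\<close> and \<open>\<delta> \<rightarrow> 0\<close>.\<close>
    have sqrt_eq: "a * inverse (sqrt a) = sqrt a"
      using elim by (metis divide_inverse real_div_sqrt less_imp_le)
    have "lower a / a \<le> energy R a \<mu>" if "\<mu> \<in> prob_measures_01" for \<mu>
    proof -
      have "lower a \<le> a * energy R a \<mu>"
        using energy_lower_bound[OF that elim, of "inverse (sqrt a)"] elim
        unfolding lower_def sqrt_eq by simp
      then show ?thesis using elim by (simp add: pos_divide_le_eq mult.commute)
    qed
    then have "lower a / a \<le> Inf (energy R a ` prob_measures_01)"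
      using lebesgue_01_in_prob_measures_01 by (intro cInf_greatest) auto
    then show ?case using elim by (simp add: pos_divide_le_eq mult.commute)
  qed
  show "eventually (\<lambda>a. a * Inf (energy R a ` prob_measures_01) \<le> a * energy R a ?U) at_top"
    using eventually_gt_at_top[of 0]
    by eventually_elim (intro mult_left_mono cInf_lower bdd imageI lebesgue_01_in_prob_measures_01, auto)
  have "((\<lambda>a. 2 * primitive (sqrt a)^2 / ((1 + 2 * inverse (sqrt a)) * R_integral)) \<longlongrightarrow>
      2 * R_integral^2 / ((1 + 2 * 0) * R_integral)) at_top"
    using R_integral_pos
    by (intro tendsto_intros filterlim_compose[OF primitive_tendsto sqrt_at_top]
        tendsto_inverse_0_at_top[OF sqrt_at_top]) auto
  then show "(lower \<longlongrightarrow> 2 * R_integral) at_top"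
    using R_integral_pos by (simp add: lower_def power2_eq_square)
  show "((\<lambda>a. a * energy R a ?U) \<longlongrightarrow> 2 * R_integral) at_top"
    using scaled_uniform_energy_tendsto
    by (simp add: energy_def integral_restrict_space set_lebesgue_integral_def)
qed

lemma C_X_div_tendsto: "((\<lambda>a. C_X R a / a) \<longlongrightarrow> inverse (2 * R_integral)) at_top"
proof -
  have "((\<lambda>a. inverse (a * Inf (energy R a ` prob_measures_01))) \<longlongrightarrow> inverse (2 * R_integral)) at_top"
    using R_integral_pos by (intro tendsto_inverse scaled_min_energy_tendsto) auto
  moreover have "C_X R a / a = inverse (a * Inf (energy R a ` prob_measures_01))" for a
    by (simp add: C_X_def inverse_mult_distrib divide_inverse_commute)
  ultimately show ?thesis by simp
qed

end

theorem theorem7p1: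
  fixes M :: "'a measure" and X :: "real \<Rightarrow> 'a \<Rightarrow> real" and R :: "real \<Rightarrow> real"
  assumes gauss: "centered_gaussian_process M X"
    and stat: "stationary_process M X"
    and paths: "\<forall>\<omega>\<in>space M. continuous_on UNIV (\<lambda>t. X t \<omega>)"
    and R_def: "\<forall>t. R t = cov M (X 0) (X t)"
    and R_pos: "\<forall>t. R t > 0"
    and R_int: "set_integrable lborel {0..} R"
  shows "((\<lambda>a. a * (LINT u:{0..1}|lborel. (LINT v:{0..1}|lborel. R (a * (u - v)))))
            \<longlongrightarrow> 2 * (LINT t:{0..}|lborel. R t)) at_top
       \<and> ((\<lambda>a. C_X R a / a) \<longlongrightarrow> inverse (2 * (LINT t:{0..}|lborel. R t))) at_top"
proof -
  interpret X: stationary_gaussian_process M X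
    using gauss stat by unfold_locales
  have R_eq: "R = X.covariance"
    using R_def by (simp add: fun_eq_iff X.covariance_def)
  interpret integrable_positive_definite_function R
    using X.continuous_covariance[OF paths] X.covariance_even X.covariance_positive_definite
      R_pos R_int unfolding R_eq by unfold_locales auto
  show ?thesis
    using scaled_uniform_energy_tendsto C_X_div_tendsto by (simp add: R_integral_def)
qed

end
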